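(* Let $G$ be a graph formed from the claw $K_{1,3}$ by subdividing a single edge $0$ or more times. If $L$ is a list-assignment with $|L(v)|\ge\deg(v)+1$ for all $v\in V(G)$ and $\alpha,\beta$ are unfrozen $L$-colourings, then $\alpha\sim\beta$.
   Context: An $L$-colouring is a proper colouring $\varphi$ with $\varphi(v)\in L(v)$ for all $v$. A vertex $v$ is frozen under $\varphi$ if every colour of $L(v)\setminus\{\varphi(v)\}$ appears on a neighbour of $v$; a colouring is unfrozen if at least one vertex is not frozen. $\alpha\sim\beta$ means $\alpha$ can be transformed into $\beta$ by a sequence of single-vertex recolouring steps, each keeping the colouring a proper $L$-colouring. *)

theory Defs
  imports Main
begin

definition degree :: "'a set \<Rightarrow> ('a \<Rightarrow> 'a \<Rightarrow> bool) \<Rightarrow> 'a \<Rightarrow> nat" where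
  "degree V E v = card {u \<in> V. E v u}"

text \<open>Proper L-colouring (only values on V matter).\<close>
definition L_colouring :: "'a set \<Rightarrow> ('a \<Rightarrow> 'a \<Rightarrow> bool) \<Rightarrow> ('a \<Rightarrow> 'c set) \<Rightarrow> ('a \<Rightarrow> 'c) \<Rightarrow> bool" where
  "L_colouring V E L \<phi> \<longleftrightarrow>
     (\<forall>v\<in>V. \<phi> v \<in> L v) \<and> (\<forall>u\<in>V. \<forall>v\<in>V. E u v \<longrightarrow> \<phi> u \<noteq> \<phi> v)"

definition frozen_at :: "'a set \<Rightarrow> ('a \<Rightarrow> 'a \<Rightarrow> bool) \<Rightarrow> ('a \<Rightarrow> 'c set) \<Rightarrow> ('a \<Rightarrow> 'c) \<Rightarrow> 'a \<Rightarrow> bool" where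
  "frozen_at V E L \<phi> v \<longleftrightarrow> (\<forall>c \<in> L v - {\<phi> v}. \<exists>u\<in>V. E v u \<and> \<phi> u = c)"

definition unfrozen :: "'a set \<Rightarrow> ('a \<Rightarrow> 'a \<Rightarrow> bool) \<Rightarrow> ('a \<Rightarrow> 'c set) \<Rightarrow> ('a \<Rightarrow> 'c) \<Rightarrow> bool" where
  "unfrozen V E L \<phi> \<longleftrightarrow> (\<exists>v\<in>V. \<not> frozen_at V E L \<phi> v)"

definition recol_step :: "'a set \<Rightarrow> ('a \<Rightarrow> 'a \<Rightarrow> bool) \<Rightarrow> ('a \<Rightarrow> 'c set) \<Rightarrow> ('a \<Rightarrow> 'c) \<Rightarrow> ('a \<Rightarrow> 'c) \<Rightarrow> bool" where
  "recol_step V E L \<alpha> \<beta> \<longleftrightarrow> L_colouring V E L \<alpha> \<and> L_colouring V E L \<beta> \<and>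
     (\<exists>v\<in>V. \<forall>u\<in>V. u \<noteq> v \<longrightarrow> \<alpha> u = \<beta> u)"

definition reconf_equiv :: "'a set \<Rightarrow> ('a \<Rightarrow> 'a \<Rightarrow> bool) \<Rightarrow> ('a \<Rightarrow> 'c set) \<Rightarrow> ('a \<Rightarrow> 'c) \<Rightarrow> ('a \<Rightarrow> 'c) \<Rightarrow> bool" where
  "reconf_equiv V E L \<alpha> \<beta> \<longleftrightarrow> (recol_step V E L)\<^sup>*\<^sup>* \<alpha> \<beta>"

text \<open>The claw K_{1,3} with the edge 0--3 subdivided k times, on vertices {0..k+3}:
  centre 0, leaves 1 and 2, path 0 - 3 - 4 - ... - (k+3).\<close>
definition subdiv_claw_edge :: "nat \<Rightarrow> nat \<Rightarrow> nat \<Rightarrow> bool" where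
  "subdiv_claw_edge k i j \<longleftrightarrow>
     (min i j = 0 \<and> max i j \<in> {1,2,3}) \<or>
     (3 \<le> min i j \<and> max i j = min i j + 1 \<and> max i j \<le> k + 3)"

end

theory Submission
  imports Defs
begin

(* If some list has two more colours than the degree of its vertex, the connected graph is
   slack-degenerate: every nonempty vertex set contains a vertex that is isolated in it or has two
   spare colours relative to it. Deleting such a vertex v, every recolouring sequence of the rest
   lifts to the whole graph, since before each step v can move to a colour used neither by its
   neighbours nor by the incoming colour; so all L-colourings are equivalent.

   Otherwise every list is tight: |L(0)| = 4, |L(1)| = |L(2)| = 2 and |L(3)| <= 3, so the centre 0
   has a colour x that vertex 3 never takes. Fixing the centre at x isolates the leaves and gives
   vertex 3 a spare colour, and the same lifting shows that all colourings with centre x are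
   equivalent. An unfrozen colouring reaches one of them: the centre moves from p to q (after the
   leaves are recoloured) unless a leaf list equals {p, q}; an unfrozen path vertex lets vertex 3
   change colour; and as the two leaf lists block at most two pairs of colours, a detour through
   another colour of L(0) exists unless every vertex is frozen. *)

section \<open>Recolouring steps and frozen vertices\<close>

lemma L_colouring_subset: "L_colouring V E L \<phi> \<Longrightarrow> S \<subseteq> V \<Longrightarrow> L_colouring S E L \<phi>"
  unfolding L_colouring_def by blast

lemma L_colouring_cong:
  "L_colouring V E L \<phi> \<Longrightarrow> (\<And>v. v \<in> V \<Longrightarrow> \<psi> v = \<phi> v) \<Longrightarrow> L_colouring V E L \<psi>"
  unfolding L_colouring_def by auto

lemma L_colouring_in_list: "L_colouring V E L \<phi> \<Longrightarrow> v \<in> V \<Longrightarrow> \<phi> v \<in> L v"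
  unfolding L_colouring_def by blast

lemma L_colouring_proper:
  "L_colouring V E L \<phi> \<Longrightarrow> u \<in> V \<Longrightarrow> v \<in> V \<Longrightarrow> E u v \<Longrightarrow> \<phi> u \<noteq> \<phi> v"
  unfolding L_colouring_def by blast

lemma L_colouring_loopless: "L_colouring V E L \<phi> \<Longrightarrow> v \<in> V \<Longrightarrow> \<not> E v v"
  unfolding L_colouring_def by blast

lemma L_colouring_fun_upd:
  assumes col: "L_colouring V E L \<phi>" and sym: "symp_on V E" and "v \<in> V" "c \<in> L v"
    and free: "\<And>u. u \<in> V \<Longrightarrow> E v u \<Longrightarrow> \<phi> u \<noteq> c"
  shows "L_colouring V E L (\<phi>(v := c))"
  unfolding L_colouring_def
proof (intro conjI ballI impI)
  fix u assume "u \<in> V"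
  then show "(\<phi>(v := c)) u \<in> L u"
    using L_colouring_in_list[OF col] \<open>c \<in> L v\<close> by simp
next
  fix u w assume uw: "u \<in> V" "w \<in> V" "E u w"
  have "\<not> E v v" using L_colouring_loopless[OF col \<open>v \<in> V\<close>] .
  then consider "u = v" "w \<noteq> v" | "u \<noteq> v" "w = v" | "u \<noteq> v" "w \<noteq> v"
    using uw(3) by blast
  then show "(\<phi>(v := c)) u \<noteq> (\<phi>(v := c)) w"
  proof cases
    case 1
    then show ?thesis using free[OF uw(2)] uw(3) by auto
  next
    case 2
    then show ?thesis using free[OF uw(1)] symp_onD[OF sym uw] by auto
  next
    case 3
    then show ?thesis using L_colouring_proper[OF col uw] by simp
  qed
qed

lemma recol_stepI:
  "L_colouring V E L \<phi> \<Longrightarrow> L_colouring V E L \<psi> \<Longrightarrow> v \<in> V \<Longrightarrow>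
   (\<And>u. u \<in> V \<Longrightarrow> u \<noteq> v \<Longrightarrow> \<phi> u = \<psi> u) \<Longrightarrow> recol_step V E L \<phi> \<psi>"
  unfolding recol_step_def by blast

lemma recol_step_fun_upd:
  assumes "L_colouring V E L \<phi>" "symp_on V E" "v \<in> V" "c \<in> L v"
    and "\<And>u. u \<in> V \<Longrightarrow> E v u \<Longrightarrow> \<phi> u \<noteq> c"
  shows "recol_step V E L \<phi> (\<phi>(v := c))"
  using assms by (intro recol_stepI L_colouring_fun_upd) auto

lemma recol_step_if_agree:
  assumes col: "L_colouring V E L \<phi>" and agree: "\<And>v. v \<in> V \<Longrightarrow> \<psi> v = \<phi> v" and "V \<noteq> {}"
  shows "recol_step V E L \<phi> \<psi>"
proof -
  obtain v where "v \<in> V" using \<open>V \<noteq> {}\<close> by blast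
  moreover have "\<And>u. u \<in> V \<Longrightarrow> \<phi> u = \<psi> u" using agree by simp
  ultimately show ?thesis
    using recol_stepI[OF col L_colouring_cong[OF col agree]] by blast
qed

lemma symp_recol_step: "symp (recol_step V E L)"
  unfolding recol_step_def by (intro sympI) (metis (no_types))

lemma rtranclp_recol_step_sym:
  "(recol_step V E L)\<^sup>*\<^sup>* \<phi> \<psi> \<Longrightarrow> (recol_step V E L)\<^sup>*\<^sup>* \<psi> \<phi>"
  by (rule sympD[OF symp_rtranclp[OF symp_recol_step]])

lemma L_colouring_if_rtranclp_recol_step:
  "(recol_step V E L)\<^sup>*\<^sup>* \<phi> \<psi> \<Longrightarrow> L_colouring V E L \<phi> \<Longrightarrow> L_colouring V E L \<psi>"
  by (induction rule: rtranclp_induct) (auto simp: recol_step_def)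

lemma recol_step_if_not_frozen_at:
  assumes "L_colouring V E L \<phi>" "symp_on V E" "v \<in> V" "\<not> frozen_at V E L \<phi> v"
  obtains c where "c \<in> L v" "c \<noteq> \<phi> v" "recol_step V E L \<phi> (\<phi>(v := c))"
proof -
  from assms(4) obtain c where "c \<in> L v" "c \<noteq> \<phi> v" "\<And>u. u \<in> V \<Longrightarrow> E v u \<Longrightarrow> \<phi> u \<noteq> c"
    unfolding frozen_at_def by blast
  then show ?thesis using that recol_step_fun_upd[OF assms(1-3)] by blast
qed

lemma rtranclp_recol_step_cong:
  assumes path: "(recol_step V E L)\<^sup>*\<^sup>* \<phi>' \<psi>'" and "V \<noteq> {}"
    and col: "L_colouring V E L \<phi>" "L_colouring V E L \<psi>"
    and agree: "\<And>v. v \<in> V \<Longrightarrow> \<phi>' v = \<phi> v" "\<And>v. v \<in> V \<Longrightarrow> \<psi>' v = \<psi> v"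
  shows "(recol_step V E L)\<^sup>*\<^sup>* \<phi> \<psi>"
proof -
  have "recol_step V E L \<phi> \<phi>'"
    using recol_step_if_agree[OF col(1) agree(1) \<open>V \<noteq> {}\<close>] .
  moreover have "recol_step V E L \<psi>' \<psi>"
    using recol_step_if_agree[OF L_colouring_cong[OF col(2) agree(2)] _ \<open>V \<noteq> {}\<close>] agree(2) by simp
  ultimately show ?thesis
    using path by (meson converse_rtranclp_into_rtranclp rtranclp.rtrancl_into_rtrancl)
qed

lemma frozen_at_neighbour_colours:
  assumes frozen: "frozen_at V E L \<phi> x" and col: "L_colouring V E L \<phi>" and "x \<in> V"
    and "finite V" "finite (L x)" and tight: "card {u\<in>V. E x u} + 1 \<le> card (L x)"
  shows "\<phi> ` {u\<in>V. E x u} = L x - {\<phi> x}" and "inj_on \<phi> {u\<in>V. E x u}"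
proof -
  let ?N = "{u\<in>V. E x u}"
  have "finite ?N" using \<open>finite V\<close> by simp
  have covered: "L x - {\<phi> x} \<subseteq> \<phi> ` ?N"
  proof
    fix c assume "c \<in> L x - {\<phi> x}"
    then obtain u where "u \<in> V" "E x u" "\<phi> u = c"
      using frozen unfolding frozen_at_def by blast
    then show "c \<in> \<phi> ` ?N" by blast
  qed
  have "card (L x - {\<phi> x}) = card (L x) - 1"
    using L_colouring_in_list[OF col \<open>x \<in> V\<close>] \<open>finite (L x)\<close> by simp
  moreover have "card (L x - {\<phi> x}) \<le> card (\<phi> ` ?N)"
    using card_mono[OF _ covered] \<open>finite ?N\<close> by simp
  moreover have "card (\<phi> ` ?N) \<le> card ?N"
    using card_image_le[OF \<open>finite ?N\<close>] .
  ultimately have eq: "card (L x - {\<phi> x}) = card (\<phi> ` ?N)" and inj: "card (\<phi> ` ?N) = card ?N"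
    using tight by linarith+
  show "\<phi> ` ?N = L x - {\<phi> x}"
    using card_subset_eq[OF finite_imageI[OF \<open>finite ?N\<close>] covered eq] by simp
  show "inj_on \<phi> ?N"
    by (subst inj_on_iff_eq_card[OF \<open>finite ?N\<close>]) (rule inj)
qed

lemma not_frozen_at_if_neighbour_recoloured:
  assumes "frozen_at V E L \<phi> x" "L_colouring V E L \<phi>" "x \<in> V"
    and "finite V" "finite (L x)" "card {u\<in>V. E x u} + 1 \<le> card (L x)"
    and w: "w \<in> V" "E x w" "\<psi> w \<noteq> \<phi> w"
    and unchanged: "\<psi> x = \<phi> x" "\<And>u. u \<in> V \<Longrightarrow> E x u \<Longrightarrow> u \<noteq> w \<Longrightarrow> \<psi> u = \<phi> u"
  shows "\<not> frozen_at V E L \<psi> x"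
proof
  assume "frozen_at V E L \<psi> x"
  note neighbours = frozen_at_neighbour_colours[OF assms(1-6)]
  have "\<phi> w \<in> \<phi> ` {u\<in>V. E x u}" using w by blast
  then have "\<phi> w \<in> L x - {\<psi> x}" using neighbours(1) unchanged(1) by simp
  then obtain u where u: "u \<in> V" "E x u" "\<psi> u = \<phi> w"
    using \<open>frozen_at V E L \<psi> x\<close> unfolding frozen_at_def by blast
  then have "u \<noteq> w" using w by auto
  then have "\<phi> u = \<phi> w" using u unchanged(2) by simp
  then have "u = w" using inj_onD[OF neighbours(2)] u w by simp
  then show False using \<open>u \<noteq> w\<close> by contradiction
qed

section \<open>Slack-degenerate list assignments\<close>

definition slack_degenerate :: "'a set \<Rightarrow> ('a \<Rightarrow> 'a \<Rightarrow> bool) \<Rightarrow> ('a \<Rightarrow> 'c set) \<Rightarrow> bool" where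
  "slack_degenerate V E L \<longleftrightarrow>
     (\<forall>S\<subseteq>V. S \<noteq> {} \<longrightarrow> (\<exists>v\<in>S. {u\<in>S. E v u} = {} \<or> card {u\<in>S. E v u} + 2 \<le> card (L v)))"

lemma slack_degenerate_subset: "slack_degenerate V E L \<Longrightarrow> S \<subseteq> V \<Longrightarrow> slack_degenerate S E L"
  unfolding slack_degenerate_def by (meson subset_trans)

lemma exists_colour_avoiding:
  assumes "finite N" "card N + 2 \<le> card C"
  shows "\<exists>c\<in>C. c \<notin> f ` N \<and> c \<noteq> d"
proof (rule ccontr)
  assume "\<not> ?thesis"
  then have "C \<subseteq> insert d (f ` N)" by blast
  then have "card C \<le> card (insert d (f ` N))"
    using \<open>finite N\<close> by (intro card_mono) auto
  also have "\<dots> \<le> card (f ` N) + 1"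
    using \<open>finite N\<close> by (simp add: card_insert_if)
  also have "\<dots> \<le> card N + 1"
    using card_image_le[OF \<open>finite N\<close>, of f] by simp
  finally show False using assms(2) by simp
qed

lemma rtranclp_recol_step_lift:
  assumes "finite V" and sym: "symp_on V E" and "v \<in> V"
    and slack: "{u\<in>V. E v u} = {} \<or> card {u\<in>V. E v u} + 2 \<le> card (L v)"
    and path: "(recol_step (V - {v}) E L)\<^sup>*\<^sup>* \<alpha> \<delta>" and col: "L_colouring V E L \<alpha>"
  shows "\<exists>\<beta>. (recol_step V E L)\<^sup>*\<^sup>* \<alpha> \<beta> \<and> (\<forall>u\<in>V - {v}. \<beta> u = \<delta> u)"
  using path
proof (induction rule: rtranclp_induct)
  case base
  then show ?case by blast
next
  case (step \<delta> \<delta>')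
  then obtain \<beta> where path_\<beta>: "(recol_step V E L)\<^sup>*\<^sup>* \<alpha> \<beta>" and agree: "\<forall>u\<in>V - {v}. \<beta> u = \<delta> u"
    by blast
  have col_\<beta>: "L_colouring V E L \<beta>"
    using L_colouring_if_rtranclp_recol_step[OF path_\<beta> col] .
  from step.hyps(2) obtain w where w: "w \<in> V - {v}"
    and unchanged: "\<forall>u\<in>V - {v}. u \<noteq> w \<longrightarrow> \<delta> u = \<delta>' u"
    and col_\<delta>': "L_colouring (V - {v}) E L \<delta>'"
    unfolding recol_step_def by blast
  obtain c where c: "c \<in> L v" "\<And>u. u \<in> V \<Longrightarrow> E v u \<Longrightarrow> \<beta> u \<noteq> c" "E v w \<Longrightarrow> c \<noteq> \<delta>' w"
  proof (cases "{u\<in>V. E v u} = {}")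
    case True
    then show ?thesis
      using that[of "\<beta> v"] L_colouring_in_list[OF col_\<beta> \<open>v \<in> V\<close>] w by blast
  next
    case False
    then have big: "card {u\<in>V. E v u} + 2 \<le> card (L v)" using slack by blast
    obtain c where "c \<in> L v" "c \<notin> \<beta> ` {u\<in>V. E v u}" "c \<noteq> \<delta>' w"
      using exists_colour_avoiding[OF _ big, of \<beta> "\<delta>' w"] \<open>finite V\<close> by auto
    then show ?thesis using that[of c] by blast
  qed
  define \<beta>' where "\<beta>' = \<beta>(v := c)"
  have step_v: "recol_step V E L \<beta> \<beta>'"
    unfolding \<beta>'_def using recol_step_fun_upd[OF col_\<beta> sym \<open>v \<in> V\<close> c(1)] c(2) by blast
  then have col_\<beta>': "L_colouring V E L \<beta>'"
    unfolding recol_step_def by blast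
  have "\<beta>' u \<noteq> \<delta>' w" if u: "u \<in> V" "E w u" for u
  proof (cases "u = v")
    case True
    then have "E v w" using symp_onD[OF sym] u w by blast
    then show ?thesis using True c(3) \<beta>'_def by simp
  next
    case False
    have "u \<noteq> w" using L_colouring_loopless[OF col_\<delta>'] u w by blast
    then have "\<beta>' u = \<delta>' u" using False u agree unchanged \<beta>'_def by simp
    moreover have "\<delta>' w \<noteq> \<delta>' u"
      using L_colouring_proper[OF col_\<delta>'] u w False by blast
    ultimately show ?thesis by simp
  qed
  then have step_w: "recol_step V E L \<beta>' (\<beta>'(w := \<delta>' w))"
    using recol_step_fun_upd[OF col_\<beta>' sym] w L_colouring_in_list[OF col_\<delta>' w] by blast
  show ?case
  proof (intro exI conjI)
    show "(recol_step V E L)\<^sup>*\<^sup>* \<alpha> (\<beta>'(w := \<delta>' w))"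
      using path_\<beta> step_v step_w by (meson rtranclp.rtrancl_into_rtrancl)
    show "\<forall>u\<in>V - {v}. (\<beta>'(w := \<delta>' w)) u = \<delta>' u"
      using agree unchanged \<beta>'_def by auto
  qed
qed

(* Only agreement on V can be reached: for V = {} there are no recolouring steps at all. *)
lemma slack_degenerate_reaches_agreeing:
  assumes "finite V" "symp_on V E" "slack_degenerate V E L"
    and "L_colouring V E L \<alpha>" "L_colouring V E L \<gamma>"
  shows "\<exists>\<gamma>'. (recol_step V E L)\<^sup>*\<^sup>* \<alpha> \<gamma>' \<and> (\<forall>v\<in>V. \<gamma>' v = \<gamma> v)"
  using assms
proof (induction "card V" arbitrary: V rule: less_induct)
  case less
  show ?case
  proof (cases "V = {}")
    case True
    then show ?thesis by blast
  next
    case False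
    then obtain v where "v \<in> V" and slack: "{u\<in>V. E v u} = {} \<or> card {u\<in>V. E v u} + 2 \<le> card (L v)"
      using less.prems(3) unfolding slack_degenerate_def by blast
    have "card (V - {v}) < card V"
      using less.prems(1) \<open>v \<in> V\<close> by (rule card_Diff1_less)
    moreover have "finite (V - {v})" "symp_on (V - {v}) E" "slack_degenerate (V - {v}) E L"
      "L_colouring (V - {v}) E L \<alpha>" "L_colouring (V - {v}) E L \<gamma>"
      using less.prems symp_on_subset[OF _ Diff_subset] slack_degenerate_subset[OF _ Diff_subset]
        L_colouring_subset[OF _ Diff_subset] by auto
    ultimately obtain \<delta> where path: "(recol_step (V - {v}) E L)\<^sup>*\<^sup>* \<alpha> \<delta>"
      and agree: "\<forall>u\<in>V - {v}. \<delta> u = \<gamma> u"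
      using less.hyps by blast
    obtain \<beta> where path_\<beta>: "(recol_step V E L)\<^sup>*\<^sup>* \<alpha> \<beta>" and "\<forall>u\<in>V - {v}. \<beta> u = \<delta> u"
      using rtranclp_recol_step_lift[OF less.prems(1,2) \<open>v \<in> V\<close> slack path less.prems(4)] by blast
    then have "recol_step V E L \<beta> \<gamma>"
      using recol_stepI[OF L_colouring_if_rtranclp_recol_step[OF path_\<beta> less.prems(4)] less.prems(5)
          \<open>v \<in> V\<close>] agree by simp
    then have "(recol_step V E L)\<^sup>*\<^sup>* \<alpha> \<gamma>"
      using path_\<beta> by (meson rtranclp.rtrancl_into_rtrancl)
    then show ?thesis by blast
  qed
qed

theorem slack_degenerate_reconfigurable:
  assumes "finite V" "symp_on V E" "slack_degenerate V E L" "V \<noteq> {}"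
    and col_\<alpha>: "L_colouring V E L \<alpha>" and col_\<beta>: "L_colouring V E L \<beta>"
  shows "(recol_step V E L)\<^sup>*\<^sup>* \<alpha> \<beta>"
proof -
  obtain \<gamma> where path: "(recol_step V E L)\<^sup>*\<^sup>* \<alpha> \<gamma>" and "\<forall>v\<in>V. \<gamma> v = \<beta> v"
    using slack_degenerate_reaches_agreeing[OF assms(1-3) col_\<alpha> col_\<beta>] by blast
  then have "recol_step V E L \<gamma> \<beta>"
    using recol_step_if_agree[OF L_colouring_if_rtranclp_recol_step[OF path col_\<alpha>] _ \<open>V \<noteq> {}\<close>]
    by simp
  then show ?thesis using path by (meson rtranclp.rtrancl_into_rtrancl)
qed

lemma card_neighbours_less_if_outside:
  "finite V \<Longrightarrow> S \<subseteq> V \<Longrightarrow> w \<in> V - S \<Longrightarrow> E v w \<Longrightarrow> card {u\<in>S. E v u} < card {u\<in>V. E v u}"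
  by (intro psubset_card_mono) auto

lemma slack_degenerate_if_connected:
  assumes "finite V"
    and connected: "\<And>S. S \<subseteq> V \<Longrightarrow> S \<noteq> {} \<Longrightarrow> S \<noteq> V \<Longrightarrow> \<exists>v\<in>S. \<exists>w\<in>V - S. E v w"
    and lists: "\<And>v. v \<in> V \<Longrightarrow> degree V E v + 1 \<le> card (L v)"
    and "s \<in> V" and slack: "degree V E s + 2 \<le> card (L s)"
  shows "slack_degenerate V E L"
  unfolding slack_degenerate_def
proof (intro allI impI)
  fix S assume "S \<subseteq> V" "S \<noteq> {}"
  show "\<exists>v\<in>S. {u\<in>S. E v u} = {} \<or> card {u\<in>S. E v u} + 2 \<le> card (L v)"
  proof (cases "s \<in> S")
    case True
    have "card {u\<in>S. E s u} \<le> degree V E s"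
      unfolding degree_def using \<open>finite V\<close> \<open>S \<subseteq> V\<close> by (intro card_mono) auto
    then have "card {u\<in>S. E s u} + 2 \<le> card (L s)" using slack by linarith
    then show ?thesis using True by blast
  next
    case False
    then have "S \<noteq> V" using \<open>s \<in> V\<close> by blast
    then obtain v w where "v \<in> S" and w: "w \<in> V - S" "E v w"
      using connected[OF \<open>S \<subseteq> V\<close> \<open>S \<noteq> {}\<close>] by blast
    have "card {u\<in>S. E v u} < degree V E v"
      unfolding degree_def by (rule card_neighbours_less_if_outside[of V S w E v, OF \<open>finite V\<close> \<open>S \<subseteq> V\<close> w])
    moreover have "degree V E v + 1 \<le> card (L v)" using lists \<open>v \<in> S\<close> \<open>S \<subseteq> V\<close> by blast
    ultimately have "card {u\<in>S. E v u} + 2 \<le> card (L v)" by linarith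
    then show ?thesis using \<open>v \<in> S\<close> by blast
  qed
qed

lemma rtranclp_recol_step_fix_vertex:
  assumes path: "(recol_step (V - {r}) E L')\<^sup>*\<^sup>* \<phi> \<psi>"
    and sym: "symp_on V E" and "r \<in> V" "x \<in> L r" "\<not> E r r"
    and sub: "\<And>v. v \<in> V - {r} \<Longrightarrow> L' v \<subseteq> L v"
    and avoid: "\<And>v. v \<in> V - {r} \<Longrightarrow> E r v \<Longrightarrow> x \<notin> L' v"
  shows "(recol_step V E L)\<^sup>*\<^sup>* (\<phi>(r := x)) (\<psi>(r := x))"
proof -
  have extend: "L_colouring V E L (\<delta>(r := x))" if col: "L_colouring (V - {r}) E L' \<delta>" for \<delta>
    unfolding L_colouring_def
  proof (intro conjI ballI impI)
    fix v assume "v \<in> V"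
    then show "(\<delta>(r := x)) v \<in> L v"
      using L_colouring_in_list[OF col] sub \<open>x \<in> L r\<close> by (cases "v = r") auto
  next
    fix u v assume uv: "u \<in> V" "v \<in> V" "E u v"
    have fresh: "x \<noteq> \<delta> w" if "w \<in> V - {r}" "E r w" for w
      using avoid[OF that] L_colouring_in_list[OF col \<open>w \<in> V - {r}\<close>] by auto
    consider "u = r" "v \<noteq> r" | "u \<noteq> r" "v = r" | "u \<noteq> r" "v \<noteq> r"
      using uv(3) \<open>\<not> E r r\<close> by blast
    then show "(\<delta>(r := x)) u \<noteq> (\<delta>(r := x)) v"
    proof cases
      case 1
      then show ?thesis using fresh[of v] uv by simp
    next
      case 2
      then show ?thesis using fresh[of u] uv symp_onD[OF sym uv] by auto
    next
      case 3
      then show ?thesis using L_colouring_proper[OF col] uv by simp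
    qed
  qed
  show ?thesis
    using path
  proof (induction rule: rtranclp_induct)
    case base
    then show ?case by simp
  next
    case (step \<delta> \<delta>')
    from step.hyps(2) obtain w where "w \<in> V - {r}" "\<forall>u\<in>V - {r}. u \<noteq> w \<longrightarrow> \<delta> u = \<delta>' u"
      and "L_colouring (V - {r}) E L' \<delta>" "L_colouring (V - {r}) E L' \<delta>'"
      unfolding recol_step_def by blast
    then have "recol_step V E L (\<delta>(r := x)) (\<delta>'(r := x))"
      by (intro recol_stepI[of _ _ _ _ _ w] extend) auto
    then show ?case using step.IH by (meson rtranclp.rtrancl_into_rtrancl)
  qed
qed

theorem reconfigurable_fixing_vertex:
  assumes "finite V" and sym: "symp_on V E" and "r \<in> V"
    and slack: "slack_degenerate (V - {r}) E (\<lambda>v. if E r v then L v - {x} else L v)"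
    and col_\<alpha>: "L_colouring V E L \<alpha>" and col_\<beta>: "L_colouring V E L \<beta>"
    and "\<alpha> r = x" "\<beta> r = x"
  shows "(recol_step V E L)\<^sup>*\<^sup>* \<alpha> \<beta>"
proof -
  let ?L' = "\<lambda>v. if E r v then L v - {x} else L v"
  have restrict: "L_colouring (V - {r}) E ?L' \<gamma>" if col: "L_colouring V E L \<gamma>" "\<gamma> r = x" for \<gamma>
    unfolding L_colouring_def
  proof (intro conjI ballI impI)
    fix v assume v: "v \<in> V - {r}"
    have "\<gamma> v \<in> L v" using L_colouring_in_list[OF col(1)] v by blast
    moreover have "\<gamma> v \<noteq> x" if "E r v"
      using L_colouring_proper[OF col(1) \<open>r \<in> V\<close>, of v] col(2) v that by auto
    ultimately show "\<gamma> v \<in> ?L' v" by simp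
  next
    fix u v assume "u \<in> V - {r}" "v \<in> V - {r}" "E u v"
    then show "\<gamma> u \<noteq> \<gamma> v" using L_colouring_proper[OF col(1)] by blast
  qed
  obtain \<gamma> where path: "(recol_step (V - {r}) E ?L')\<^sup>*\<^sup>* \<alpha> \<gamma>" and agree: "\<forall>v\<in>V - {r}. \<gamma> v = \<beta> v"
    using slack_degenerate_reaches_agreeing[OF _ symp_on_subset[OF sym] slack]
      restrict[OF col_\<alpha> \<open>\<alpha> r = x\<close>] restrict[OF col_\<beta> \<open>\<beta> r = x\<close>] \<open>finite V\<close> by blast
  have "(recol_step V E L)\<^sup>*\<^sup>* (\<alpha>(r := x)) (\<gamma>(r := x))"
    using rtranclp_recol_step_fix_vertex[OF path sym \<open>r \<in> V\<close>]
      L_colouring_in_list[OF col_\<alpha> \<open>r \<in> V\<close>] L_colouring_loopless[OF col_\<alpha> \<open>r \<in> V\<close>] \<open>\<alpha> r = x\<close>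
    by auto
  then have path': "(recol_step V E L)\<^sup>*\<^sup>* \<alpha> (\<gamma>(r := x))"
    using \<open>\<alpha> r = x\<close> fun_upd_triv[of \<alpha> r] by simp
  have "\<forall>v\<in>V. \<beta> v = (\<gamma>(r := x)) v"
    using agree \<open>\<beta> r = x\<close> by simp
  then have "recol_step V E L (\<gamma>(r := x)) \<beta>"
    using recol_step_if_agree[OF L_colouring_if_rtranclp_recol_step[OF path' col_\<alpha>]] \<open>r \<in> V\<close>
    by blast
  then show ?thesis using path' by (meson rtranclp.rtrancl_into_rtrancl)
qed

section \<open>The subdivided claw\<close>

lemma symp_subdiv_claw_edge: "symp (subdiv_claw_edge k)"
  unfolding subdiv_claw_edge_def by (intro sympI) (simp add: min.commute max.commute)

lemma subdiv_claw_edge_centre: "subdiv_claw_edge k 0 j \<longleftrightarrow> j \<in> {1, 2, 3}"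
  unfolding subdiv_claw_edge_def by auto

lemma subdiv_claw_edge_leaf: "i \<in> {1, 2} \<Longrightarrow> subdiv_claw_edge k i j \<longleftrightarrow> j = 0"
  unfolding subdiv_claw_edge_def by (auto simp: min_def max_def)

lemma subdiv_claw_edge_3: "subdiv_claw_edge k 3 j \<longleftrightarrow> j = 0 \<or> (j = 4 \<and> 1 \<le> k)"
  unfolding subdiv_claw_edge_def by (auto simp: min_def max_def)

lemma subdiv_claw_edge_Suc: "3 \<le> j \<Longrightarrow> Suc j \<le> k + 3 \<Longrightarrow> subdiv_claw_edge k j (Suc j)"
  unfolding subdiv_claw_edge_def by (auto simp: min_def max_def)

lemma subdiv_claw_edge_towards_centre:
  assumes "v \<noteq> 0" "v \<le> k + 3"
  obtains u where "u < v" "subdiv_claw_edge k v u"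
proof (cases "v \<le> 3")
  case True
  then have "subdiv_claw_edge k v 0" using assms unfolding subdiv_claw_edge_def by auto
  then show ?thesis using that assms(1) by blast
next
  case False
  then have "subdiv_claw_edge k v (v - 1)"
    using assms unfolding subdiv_claw_edge_def by (auto simp: min_def max_def)
  moreover have "v - 1 < v" using assms(1) by simp
  ultimately show ?thesis using that by blast
qed

lemma degree_subdiv_claw:
  "degree {0..k+3} (subdiv_claw_edge k) 0 = 3"
  "degree {0..k+3} (subdiv_claw_edge k) 1 = 1"
  "degree {0..k+3} (subdiv_claw_edge k) 2 = 1"
  "degree {0..k+3} (subdiv_claw_edge k) 3 \<le> 2"
proof -
  have "{u\<in>{0..k+3}. subdiv_claw_edge k 0 u} = {1, 2, 3}"
    by (auto simp: subdiv_claw_edge_centre)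
  then show "degree {0..k+3} (subdiv_claw_edge k) 0 = 3"
    unfolding degree_def by simp
  have "{u\<in>{0..k+3}. subdiv_claw_edge k i u} = {0}" if "i \<in> {1, 2}" for i
    using subdiv_claw_edge_leaf[OF that] by auto
  then show "degree {0..k+3} (subdiv_claw_edge k) 1 = 1" "degree {0..k+3} (subdiv_claw_edge k) 2 = 1"
    unfolding degree_def by simp_all
  have "{u\<in>{0..k+3}. subdiv_claw_edge k 3 u} \<subseteq> {0, 4}"
    by (auto simp: subdiv_claw_edge_3)
  then have "card {u\<in>{0..k+3}. subdiv_claw_edge k 3 u} \<le> card {0 :: nat, 4}"
    by (intro card_mono) simp_all
  then show "degree {0..k+3} (subdiv_claw_edge k) 3 \<le> 2"
    unfolding degree_def by simp
qed

lemma subdiv_claw_connected: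
  assumes "S \<subseteq> {0..k+3}" "S \<noteq> {}" "S \<noteq> {0..k+3}"
  shows "\<exists>v\<in>S. \<exists>w\<in>{0..k+3} - S. subdiv_claw_edge k v w"
proof (rule ccontr)
  assume "\<not> ?thesis"
  then have closed: "\<And>v w. v \<in> S \<Longrightarrow> w \<le> k + 3 \<Longrightarrow> subdiv_claw_edge k v w \<Longrightarrow> w \<in> S"
    by (meson DiffI atLeastAtMost_iff le0)
  have "0 \<in> S" if "v \<in> S" for v
    using that
  proof (induction v rule: less_induct)
    case (less v)
    show ?case
    proof (cases "v = 0")
      case False
      moreover have "v \<le> k + 3" using less.prems assms(1) by auto
      ultimately obtain u where "u < v" "subdiv_claw_edge k v u"
        by (rule subdiv_claw_edge_towards_centre)
      then show ?thesis using less closed \<open>v \<le> k + 3\<close> by simp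
    qed (use less.prems in simp)
  qed
  then have "0 \<in> S" using assms(2) by blast
  have "v \<in> S" if "v \<le> k + 3" for v
    using that
  proof (induction v rule: less_induct)
    case (less v)
    show ?case
    proof (cases "v = 0")
      case False
      then obtain u where "u < v" "subdiv_claw_edge k v u"
        using less.prems by (rule subdiv_claw_edge_towards_centre)
      then show ?thesis
        using less closed[of u v] sympD[OF symp_subdiv_claw_edge] by simp
    qed (use \<open>0 \<in> S\<close> in simp)
  qed
  then have "{0..k+3} \<subseteq> S" by auto
  then show False using assms(1,3) by blast
qed

locale claw_lists =
  fixes k :: nat and L :: "nat \<Rightarrow> 'c set"
  assumes finite_lists: "\<And>v. v \<in> {0..k+3} \<Longrightarrow> finite (L v)"
    and card_lists: "\<And>v. v \<in> {0..k+3} \<Longrightarrow> degree {0..k+3} (subdiv_claw_edge k) v + 1 \<le> card (L v)"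
begin

abbreviation "V \<equiv> {0..k+3}"
abbreviation "adj \<equiv> subdiv_claw_edge k"
abbreviation "colouring \<equiv> L_colouring V adj L"
abbreviation "reconf \<equiv> (recol_step V adj L)\<^sup>*\<^sup>*"
abbreviation "frozen \<equiv> frozen_at V adj L"

lemma symp_on_adj: "symp_on A adj"
  using symp_on_subset[OF symp_subdiv_claw_edge] by blast

lemma card_neighbours_lists: "v \<in> V \<Longrightarrow> card {u\<in>V. adj v u} + 1 \<le> card (L v)"
  using card_lists unfolding degree_def .

lemma reconf_if_recol_step: "recol_step V adj L \<phi> \<psi> \<Longrightarrow> reconf \<phi> \<psi>"
  by (rule r_into_rtranclp[of "recol_step V adj L"])

lemma reconf_recol_step_trans: "recol_step V adj L \<phi> \<psi> \<Longrightarrow> reconf \<psi> \<chi> \<Longrightarrow> reconf \<phi> \<chi>"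
  by (rule converse_rtranclp_into_rtranclp[of "recol_step V adj L"])

(* Recolouring an unfrozen path vertex j + 1 unfreezes its neighbour j; descend to vertex 3. *)
lemma reconf_recolour_3_if_path_unfrozen:
  assumes "3 \<le> j" "j \<le> k + 3" "colouring \<phi>" "\<not> frozen \<phi> j"
  shows "\<exists>\<psi>. reconf \<phi> \<psi> \<and> \<psi> 3 \<noteq> \<phi> 3 \<and> \<psi> 0 = \<phi> 0"
  using assms
proof (induction j arbitrary: \<phi> rule: nat_induct_at_least)
  case base
  then obtain c where "c \<noteq> \<phi> 3" and step: "recol_step V adj L \<phi> (\<phi>(3 := c))"
    using recol_step_if_not_frozen_at[OF _ symp_on_adj] by (metis atLeastAtMost_iff le0)
  show ?case
  proof (intro exI conjI)
    show "reconf \<phi> (\<phi>(3 := c))" using step by (rule reconf_if_recol_step)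
  qed (use \<open>c \<noteq> \<phi> 3\<close> in simp_all)
next
  case (Suc j)
  show ?case
  proof (cases "frozen \<phi> j")
    case False
    then show ?thesis using Suc by simp
  next
    case True
    have "Suc j \<in> V" using Suc.prems by simp
    then obtain c where "c \<noteq> \<phi> (Suc j)" and step: "recol_step V adj L \<phi> (\<phi>(Suc j := c))"
      using recol_step_if_not_frozen_at[OF Suc.prems(2) symp_on_adj _ Suc.prems(3)] by metis
    let ?\<phi>' = "\<phi>(Suc j := c)"
    have "j \<in> V" "adj j (Suc j)" using Suc.hyps Suc.prems by (simp_all add: subdiv_claw_edge_Suc)
    then have "\<not> frozen ?\<phi>' j"
      using not_frozen_at_if_neighbour_recoloured[OF True Suc.prems(2) _ _ finite_lists
          card_neighbours_lists \<open>Suc j \<in> V\<close>] \<open>c \<noteq> \<phi> (Suc j)\<close> by simp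
    moreover have "colouring ?\<phi>'" using step unfolding recol_step_def by blast
    ultimately obtain \<psi> where "reconf ?\<phi>' \<psi>" "\<psi> 3 \<noteq> ?\<phi>' 3" "\<psi> 0 = ?\<phi>' 0"
      using Suc.IH Suc.prems(1) by (meson Suc_leD)
    moreover have "reconf \<phi> \<psi>"
      using step \<open>reconf ?\<phi>' \<psi>\<close> by (rule reconf_recol_step_trans)
    ultimately show ?thesis using Suc.hyps by auto
  qed
qed

end

locale tight_claw = claw_lists k L for k and L :: "nat \<Rightarrow> 'c set" +
  fixes x :: 'c
  assumes card_L0: "card (L 0) = 4" and card_leaf_lists: "i \<in> {1, 2} \<Longrightarrow> card (L i) = 2"
    and x_in_L0: "x \<in> L 0" and x_notin_L3: "x \<notin> L 3"
begin

(* The centre can move from p to q, after both leaves are recoloured away from p and q, unless a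
   leaf list is exactly {p, q}. *)
definition leaves_block :: "'c \<Rightarrow> 'c \<Rightarrow> bool" where
  "leaves_block p q \<longleftrightarrow> L 1 = {p, q} \<or> L 2 = {p, q}"

definition reaches_x :: "(nat \<Rightarrow> 'c) \<Rightarrow> bool" where
  "reaches_x \<phi> \<longleftrightarrow> (\<exists>\<psi>. reconf \<phi> \<psi> \<and> \<psi> 0 = x)"

lemma reaches_x_trans: "reconf \<phi> \<psi> \<Longrightarrow> reaches_x \<psi> \<Longrightarrow> reaches_x \<phi>"
  unfolding reaches_x_def using rtranclp_trans[of "recol_step V adj L" \<phi> \<psi>] by blast

lemma leaf_list_not_within:
  assumes "i \<in> {1, 2}" "p \<noteq> q" "\<not> leaves_block p q"
  shows "L i - {p, q} \<noteq> {}"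
proof
  assume "L i - {p, q} = {}"
  moreover have "card (L i) = card {p, q}" using assms(1,2) card_leaf_lists by simp
  ultimately have "L i = {p, q}" by (intro card_subset_eq) auto
  then show False using assms unfolding leaves_block_def by auto
qed

lemma leaves_block_at_most_two:
  assumes "{a, b} \<noteq> {c, d}" "{a, b} \<noteq> {e, f}" "{c, d} \<noteq> {e, f}"
    and "leaves_block a b" "leaves_block c d"
  shows "\<not> leaves_block e f"
  using assms unfolding leaves_block_def by metis

lemma leaf_coloured_frozen:
  assumes col: "colouring \<phi>" and "i \<in> {1, 2}" and Li: "L i = {\<phi> 0, z}"
  shows "\<phi> i = z" "frozen \<phi> i"
proof -
  have "i \<in> V" "adj i 0" using \<open>i \<in> {1, 2}\<close> subdiv_claw_edge_leaf by auto
  then have "\<phi> i \<noteq> \<phi> 0" using L_colouring_proper[OF col] by simp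
  moreover have "\<phi> i \<in> L i" using L_colouring_in_list[OF col \<open>i \<in> V\<close>] .
  ultimately show "\<phi> i = z" using Li by blast
  then show "frozen \<phi> i"
    unfolding frozen_at_def using Li \<open>adj i 0\<close> by auto
qed

lemma reconf_move_centre:
  assumes col: "colouring \<phi>" and q: "q \<in> L 0" "q \<noteq> \<phi> 0" "q \<noteq> \<phi> 3"
    and "\<not> leaves_block (\<phi> 0) q"
  shows "\<exists>\<psi>. reconf \<phi> \<psi> \<and> \<psi> 0 = q \<and> (\<forall>v. v \<notin> {0, 1, 2} \<longrightarrow> \<psi> v = \<phi> v)"
proof -
  obtain c\<^sub>1 c\<^sub>2 where c: "c\<^sub>1 \<in> L 1" "c\<^sub>2 \<in> L 2" "c\<^sub>1 \<notin> {\<phi> 0, q}" "c\<^sub>2 \<notin> {\<phi> 0, q}"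
    using leaf_list_not_within[of 1 "\<phi> 0" q] leaf_list_not_within[of 2 "\<phi> 0" q] assms by blast
  let ?\<phi>\<^sub>1 = "\<phi>(1 := c\<^sub>1)"
  let ?\<phi>\<^sub>2 = "?\<phi>\<^sub>1(2 := c\<^sub>2)"
  have step\<^sub>1: "recol_step V adj L \<phi> ?\<phi>\<^sub>1"
    by (rule recol_step_fun_upd[OF col symp_on_adj]) (use c in \<open>auto simp: subdiv_claw_edge_leaf\<close>)
  then have col\<^sub>1: "colouring ?\<phi>\<^sub>1" unfolding recol_step_def by blast
  have step\<^sub>2: "recol_step V adj L ?\<phi>\<^sub>1 ?\<phi>\<^sub>2"
    by (rule recol_step_fun_upd[OF col\<^sub>1 symp_on_adj]) (use c in \<open>auto simp: subdiv_claw_edge_leaf\<close>)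
  then have col\<^sub>2: "colouring ?\<phi>\<^sub>2" unfolding recol_step_def by blast
  have step\<^sub>3: "recol_step V adj L ?\<phi>\<^sub>2 (?\<phi>\<^sub>2(0 := q))"
    by (rule recol_step_fun_upd[OF col\<^sub>2 symp_on_adj]) (use c q in \<open>auto simp: subdiv_claw_edge_centre\<close>)
  show ?thesis
  proof (intro exI conjI)
    show "reconf \<phi> (?\<phi>\<^sub>2(0 := q))"
      using step\<^sub>1 step\<^sub>2 step\<^sub>3 by (meson reconf_recol_step_trans reconf_if_recol_step)
  qed auto
qed

lemma reaches_x_direct:
  assumes col: "colouring \<phi>" and "\<phi> 0 \<noteq> x" "\<not> leaves_block (\<phi> 0) x"
  shows "reaches_x \<phi>"
proof -
  have "x \<noteq> \<phi> 3" using L_colouring_in_list[OF col, of 3] x_notin_L3 by auto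
  then show ?thesis
    using reconf_move_centre[OF col x_in_L0] assms(2,3) unfolding reaches_x_def by metis
qed

lemma reaches_x_via:
  assumes col: "colouring \<phi>" and w: "w \<in> L 0" "w \<noteq> \<phi> 0" "w \<noteq> x" "w \<noteq> \<phi> 3"
    and "\<not> leaves_block (\<phi> 0) w" "\<not> leaves_block w x"
  shows "reaches_x \<phi>"
proof -
  obtain \<psi> where path: "reconf \<phi> \<psi>" and "\<psi> 0 = w"
    using reconf_move_centre[OF col w(1,2,4)] assms(6) by blast
  have "reaches_x \<psi>"
    by (rule reaches_x_direct[OF L_colouring_if_rtranclp_recol_step[OF \<open>reconf \<phi> \<psi>\<close> col]])
      (use \<open>\<psi> 0 = w\<close> w(3) assms(7) in simp_all)
  then show ?thesis by (rule reaches_x_trans[OF path])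
qed

lemma reaches_x_via_if_path_unfrozen:
  assumes col: "colouring \<phi>" and w: "w \<in> L 0" "w \<noteq> \<phi> 0" "w \<noteq> x"
    and "\<not> leaves_block (\<phi> 0) w" "\<not> leaves_block w x"
    and "3 \<le> j" "j \<le> k + 3" "\<not> frozen \<phi> j"
  shows "reaches_x \<phi>"
proof (cases "w = \<phi> 3")
  case False
  then show ?thesis using reaches_x_via[OF col w] assms(5,6) by blast
next
  case True
  obtain \<psi> where path: "reconf \<phi> \<psi>" and "\<psi> 3 \<noteq> w" "\<psi> 0 = \<phi> 0"
    using reconf_recolour_3_if_path_unfrozen[OF assms(7,8) col assms(9)] True by blast
  have "reaches_x \<psi>"
    by (rule reaches_x_via[OF L_colouring_if_rtranclp_recol_step[OF \<open>reconf \<phi> \<psi>\<close> col] w(1)])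
      (use w assms(5,6) \<open>\<psi> 3 \<noteq> w\<close> \<open>\<psi> 0 = \<phi> 0\<close> in simp_all)
  then show ?thesis by (rule reaches_x_trans[OF path])
qed

lemma not_unfrozen_if_centre_blocked:
  assumes col: "colouring \<alpha>" and L0: "L 0 = {\<alpha> 0, x, w, w'}" and "\<alpha> 3 = w" and "x \<noteq> w'"
    and "leaves_block (\<alpha> 0) x" "leaves_block (\<alpha> 0) w'"
    and path_frozen: "\<And>j. 3 \<le> j \<Longrightarrow> j \<le> k + 3 \<Longrightarrow> frozen \<alpha> j"
  shows "\<not> unfrozen V adj L \<alpha>"
proof -
  have "{\<alpha> 0, x} \<noteq> {\<alpha> 0, w'}" using \<open>x \<noteq> w'\<close> by (auto simp: doubleton_eq_iff)
  then have "(L 1 = {\<alpha> 0, x} \<and> L 2 = {\<alpha> 0, w'}) \<or> (L 2 = {\<alpha> 0, x} \<and> L 1 = {\<alpha> 0, w'})"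
    using assms(5,6) unfolding leaves_block_def by metis
  then obtain i i' where ii': "{i, i'} = {1, 2}" "L i = {\<alpha> 0, x}" "L i' = {\<alpha> 0, w'}"
  proof (elim disjE)
    assume "L 1 = {\<alpha> 0, x} \<and> L 2 = {\<alpha> 0, w'}"
    then show thesis using that[of 1 2] by simp
  next
    assume "L 2 = {\<alpha> 0, x} \<and> L 1 = {\<alpha> 0, w'}"
    then show thesis using that[of 2 1] by (simp add: insert_commute)
  qed
  then have leaves: "i \<in> {1, 2}" "i' \<in> {1, 2}" by auto
  note leaf_i = leaf_coloured_frozen[OF col leaves(1) ii'(2)]
  note leaf_i' = leaf_coloured_frozen[OF col leaves(2) ii'(3)]
  have "frozen \<alpha> 0"
    unfolding frozen_at_def
  proof
    fix c assume "c \<in> L 0 - {\<alpha> 0}"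
    then have "c \<in> {\<alpha> i, \<alpha> i', \<alpha> 3}" using L0 leaf_i(1) leaf_i'(1) \<open>\<alpha> 3 = w\<close> by auto
    moreover have "\<forall>u\<in>{i, i', 3}. u \<in> V \<and> adj 0 u"
      using leaves subdiv_claw_edge_centre by auto
    ultimately show "\<exists>u\<in>V. adj 0 u \<and> \<alpha> u = c" by blast
  qed
  moreover have "frozen \<alpha> 1" "frozen \<alpha> 2"
    using leaf_i(2) leaf_i'(2) ii'(1) by (auto simp: doubleton_eq_iff)
  ultimately have "frozen \<alpha> v" if "v \<in> V" for v
    using path_frozen[of v] that by (cases "v \<le> 2") (auto simp: le_Suc_eq numeral_eq_Suc)
  then show ?thesis unfolding unfrozen_def by blast
qed

lemma leaves_block_not_both:
  assumes "distinct [y, x, u, u']" "leaves_block y x"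
  shows "\<not> (leaves_block y u \<or> leaves_block u x) \<or> \<not> (leaves_block y u' \<or> leaves_block u' x)"
  using assms unfolding leaves_block_def by (auto simp: doubleton_eq_iff)

(* With the path frozen, blocking {\<alpha> 0, w'} too would freeze every vertex; so w' is blocked only
   against x, and moving the centre to w' unfreezes vertex 3. *)
lemma reaches_x_if_one_side_blocked:
  assumes col: "colouring \<alpha>" and unfrozen: "unfrozen V adj L \<alpha>"
    and L0: "L 0 = {\<alpha> 0, x, w, w'}" and distinct: "distinct [\<alpha> 0, x, w, w']" and "\<alpha> 3 = w"
    and bx: "leaves_block (\<alpha> 0) x" and nbw: "\<not> leaves_block (\<alpha> 0) w" "\<not> leaves_block w x"
    and bw': "leaves_block (\<alpha> 0) w' \<or> leaves_block w' x"
  shows "reaches_x \<alpha>"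
proof (cases "\<exists>j. 3 \<le> j \<and> j \<le> k + 3 \<and> \<not> frozen \<alpha> j")
  case True
  then show ?thesis
    using reaches_x_via_if_path_unfrozen[OF col _ _ _ nbw] L0 distinct by auto
next
  case False
  then have path_frozen: "\<And>j. 3 \<le> j \<Longrightarrow> j \<le> k + 3 \<Longrightarrow> frozen \<alpha> j" by blast
  then have "\<not> leaves_block (\<alpha> 0) w'"
    using not_unfrozen_if_centre_blocked[OF col L0 \<open>\<alpha> 3 = w\<close> _ bx] unfrozen distinct by auto
  then have "leaves_block w' x" using bw' by blast
  obtain \<alpha>' where path: "reconf \<alpha> \<alpha>'" and "\<alpha>' 0 = w'"
    and unchanged: "\<forall>v. v \<notin> {0, 1, 2} \<longrightarrow> \<alpha>' v = \<alpha> v"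
    using reconf_move_centre[OF col] L0 distinct \<open>\<alpha> 3 = w\<close> \<open>\<not> leaves_block (\<alpha> 0) w'\<close> by auto
  have col': "colouring \<alpha>'" using L_colouring_if_rtranclp_recol_step[OF path col] .
  have "\<not> frozen \<alpha>' 3"
  proof (rule not_frozen_at_if_neighbour_recoloured[OF path_frozen[of 3] col _ _ finite_lists
        card_neighbours_lists, of 0])
    show "\<alpha>' 0 \<noteq> \<alpha> 0" using \<open>\<alpha>' 0 = w'\<close> distinct by auto
    show "\<And>u. u \<in> V \<Longrightarrow> adj 3 u \<Longrightarrow> u \<noteq> 0 \<Longrightarrow> \<alpha>' u = \<alpha> u"
      using unchanged by (auto simp: subdiv_claw_edge_3)
  qed (use unchanged in \<open>auto simp: subdiv_claw_edge_3\<close>)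
  have "\<not> leaves_block w' w"
    using leaves_block_at_most_two[OF _ _ _ bx \<open>leaves_block w' x\<close>] distinct
    by (auto simp: doubleton_eq_iff)
  have "reaches_x \<alpha>'"
    by (rule reaches_x_via_if_path_unfrozen[OF col', of w 3])
      (use L0 distinct \<open>\<alpha>' 0 = w'\<close> \<open>\<not> leaves_block w' w\<close> nbw \<open>\<not> frozen \<alpha>' 3\<close> in auto)
  then show ?thesis by (rule reaches_x_trans[OF path])
qed

lemma reaches_x_if_unfrozen:
  assumes col: "colouring \<alpha>" and unfrozen: "unfrozen V adj L \<alpha>"
  shows "reaches_x \<alpha>"
proof (cases "\<alpha> 0 = x")
  case True
  then show ?thesis unfolding reaches_x_def by blast
next
  case False
  have "\<alpha> 0 \<in> L 0" using L_colouring_in_list[OF col] by simp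
  then have "card (L 0 - {\<alpha> 0, x}) = 2"
    using card_L0 x_in_L0 False finite_lists[of 0] by (simp add: card_Diff_subset)
  then obtain u u' where "L 0 - {\<alpha> 0, x} = {u, u'}" "u \<noteq> u'" by (meson card_2_iff)
  then have L0: "L 0 = {\<alpha> 0, x, u, u'}" and distinct: "distinct [\<alpha> 0, x, u, u']"
    using \<open>\<alpha> 0 \<in> L 0\<close> x_in_L0 False by auto
  show ?thesis
  proof (cases "leaves_block (\<alpha> 0) x")
    case False
    then show ?thesis using reaches_x_direct[OF col] \<open>\<alpha> 0 \<noteq> x\<close> by blast
  next
    case bx: True
    obtain w w' where L0': "L 0 = {\<alpha> 0, x, w, w'}" and distinct': "distinct [\<alpha> 0, x, w, w']"
      and nbw: "\<not> leaves_block (\<alpha> 0) w" "\<not> leaves_block w x"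
      using leaves_block_not_both[OF distinct bx]
    proof (elim disjE)
      assume "\<not> (leaves_block (\<alpha> 0) u \<or> leaves_block u x)"
      then show thesis using that[of u u'] L0 distinct by blast
    next
      assume "\<not> (leaves_block (\<alpha> 0) u' \<or> leaves_block u' x)"
      then show thesis using that[of u' u] L0 distinct by (auto simp: insert_commute)
    qed
    show ?thesis
    proof (cases "w = \<alpha> 3")
      case False
      then show ?thesis using reaches_x_via[OF col] L0' distinct' nbw by auto
    next
      case True
      show ?thesis
      proof (cases "leaves_block (\<alpha> 0) w' \<or> leaves_block w' x")
        case True
        then show ?thesis
          using reaches_x_if_one_side_blocked[OF col unfrozen L0' distinct' _ bx nbw] \<open>w = \<alpha> 3\<close> by simp
      next
        case False
        then show ?thesis using reaches_x_via[OF col, of w'] L0' distinct' \<open>w = \<alpha> 3\<close> by auto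
      qed
    qed
  qed
qed

(* Without the centre the leaves are isolated, and the least remaining path vertex has lost a
   neighbour while keeping its whole list, as x is not in L 3. *)
lemma slack_degenerate_without_centre:
  "slack_degenerate (V - {0}) adj (\<lambda>v. if adj 0 v then L v - {x} else L v)"
  unfolding slack_degenerate_def
proof (intro allI impI)
  fix S assume S: "S \<subseteq> V - {0}" "S \<noteq> {}"
  let ?L' = "\<lambda>v. if adj 0 v then L v - {x} else L v"
  show "\<exists>v\<in>S. {u\<in>S. adj v u} = {} \<or> card {u\<in>S. adj v u} + 2 \<le> card (?L' v)"
  proof (cases "1 \<in> S \<or> 2 \<in> S")
    case True
    then obtain i where "i \<in> {1, 2}" "i \<in> S" by blast
    moreover have "{u\<in>S. adj i u} = {}"
      using S(1) subdiv_claw_edge_leaf[OF \<open>i \<in> {1, 2}\<close>] by auto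
    ultimately show ?thesis by blast
  next
    case False
    define m where "m = Min S"
    have "finite S" using S(1) finite_subset by blast
    then have "m \<in> S" using Min_in S(2) m_def by blast
    then have "m \<noteq> 0" "m \<noteq> 1" "m \<noteq> 2" "m \<le> k + 3" using S(1) False by auto
    then have "3 \<le> m" by presburger
    obtain u where "u < m" "adj m u"
      by (rule subdiv_claw_edge_towards_centre[OF \<open>m \<noteq> 0\<close> \<open>m \<le> k + 3\<close>])
    moreover have "u \<notin> S" using Min_le[OF \<open>finite S\<close>] \<open>u < m\<close> m_def by force
    ultimately have "card {u\<in>S. adj m u} < card {u\<in>V. adj m u}"
      using card_neighbours_less_if_outside[of V S u adj m] S(1) \<open>m \<le> k + 3\<close> by auto
    moreover have "?L' m = L m"
      using x_notin_L3 \<open>3 \<le> m\<close> subdiv_claw_edge_centre by auto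
    ultimately have "card {u\<in>S. adj m u} + 2 \<le> card (?L' m)"
      using card_neighbours_lists[of m] \<open>m \<le> k + 3\<close> by simp
    then show ?thesis using \<open>m \<in> S\<close> by blast
  qed
qed

lemma reconf_if_centre_x:
  assumes "colouring \<alpha>" "colouring \<beta>" "\<alpha> 0 = x" "\<beta> 0 = x"
  shows "reconf \<alpha> \<beta>"
  using reconfigurable_fixing_vertex[OF _ symp_on_adj _ slack_degenerate_without_centre assms] by simp

end

context claw_lists
begin

theorem reconf_if_unfrozen:
  assumes \<alpha>: "colouring \<alpha>" "unfrozen V adj L \<alpha>" and \<beta>: "colouring \<beta>" "unfrozen V adj L \<beta>"
  shows "reconf \<alpha> \<beta>"
proof (cases "\<exists>s\<in>V. degree V adj s + 2 \<le> card (L s)")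
  case True
  then obtain s where "s \<in> V" "degree V adj s + 2 \<le> card (L s)" by blast
  then have "slack_degenerate V adj L"
    by (intro slack_degenerate_if_connected[OF _ subdiv_claw_connected card_lists]) simp_all
  then show ?thesis
    by (intro slack_degenerate_reconfigurable[OF _ symp_on_adj _ _ \<alpha>(1) \<beta>(1)]) simp_all
next
  case False
  have tight: "card (L v) = degree V adj v + 1" if "v \<in> V" for v
  proof -
    have "\<not> degree V adj v + 2 \<le> card (L v)" using False that by blast
    then show ?thesis using card_lists[OF that] by simp
  qed
  have "card (L 0) = 4" "card (L 3) \<le> 3"
    using tight[of 0] tight[of 3] degree_subdiv_claw(1,4) by simp_all
  have leaves: "card (L i) = 2" if "i \<in> {1, 2}" for i
    using tight[of i] degree_subdiv_claw(2,3) that by auto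
  have "\<not> L 0 \<subseteq> L 3"
  proof
    assume "L 0 \<subseteq> L 3"
    then have "card (L 0) \<le> card (L 3)" by (rule card_mono[OF finite_lists, rotated]) simp
    then show False using \<open>card (L 0) = 4\<close> \<open>card (L 3) \<le> 3\<close> by simp
  qed
  then obtain x where "x \<in> L 0" "x \<notin> L 3" by blast
  interpret tight_claw k L x
    by unfold_locales (fact \<open>card (L 0) = 4\<close> leaves \<open>x \<in> L 0\<close> \<open>x \<notin> L 3\<close>)+
  obtain \<alpha>' where path_\<alpha>: "reconf \<alpha> \<alpha>'" and "\<alpha>' 0 = x"
    using reaches_x_if_unfrozen[OF \<alpha>] unfolding reaches_x_def by blast
  obtain \<beta>' where path_\<beta>: "reconf \<beta> \<beta>'" and "\<beta>' 0 = x"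
    using reaches_x_if_unfrozen[OF \<beta>] unfolding reaches_x_def by blast
  have "reconf \<alpha>' \<beta>'"
    by (rule reconf_if_centre_x[OF L_colouring_if_rtranclp_recol_step[OF path_\<alpha> \<alpha>(1)]
          L_colouring_if_rtranclp_recol_step[OF path_\<beta> \<beta>(1)] \<open>\<alpha>' 0 = x\<close> \<open>\<beta>' 0 = x\<close>])
  moreover have "reconf \<beta>' \<beta>"
    using rtranclp_recol_step_sym[OF path_\<beta>] .
  ultimately show ?thesis
    using path_\<alpha> by (meson rtranclp_trans)
qed

end

section \<open>Transport along a graph isomorphism\<close>

locale graph_isomorphism =
  fixes f :: "'b \<Rightarrow> 'a" and A :: "'b set" and V :: "'a set"
    and F :: "'b \<Rightarrow> 'b \<Rightarrow> bool" and E :: "'a \<Rightarrow> 'a \<Rightarrow> bool"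
  assumes bij: "bij_betw f A V"
    and edges: "\<And>i j. i \<in> A \<Longrightarrow> j \<in> A \<Longrightarrow> E (f i) (f j) \<longleftrightarrow> F i j"
begin

abbreviation "g \<equiv> inv_into A f"

lemma f_in_V: "i \<in> A \<Longrightarrow> f i \<in> V"
  using bij_betwE[OF bij] by blast

lemma inv_in_A: "v \<in> V \<Longrightarrow> g v \<in> A"
  using bij_betwE[OF bij_betw_inv_into[OF bij]] by blast

lemma f_inv_eq: "v \<in> V \<Longrightarrow> f (g v) = v"
  using bij_betw_inv_into_right[OF bij] .

lemma L_colouring_comp: "L_colouring V E L \<phi> \<Longrightarrow> L_colouring A F (L \<circ> f) (\<phi> \<circ> f)"
  unfolding L_colouring_def using f_in_V edges by auto

lemma L_colouring_comp_inv: "L_colouring A F (L \<circ> f) \<chi> \<Longrightarrow> L_colouring V E L (\<chi> \<circ> g)"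
  unfolding L_colouring_def using inv_in_A f_inv_eq edges by (metis comp_apply)

lemma degree_comp: "i \<in> A \<Longrightarrow> degree A F i = degree V E (f i)"
proof -
  assume "i \<in> A"
  have "{u\<in>V. E (f i) u} = f ` {j\<in>A. F i j}"
  proof
    show "{u\<in>V. E (f i) u} \<subseteq> f ` {j\<in>A. F i j}"
    proof
      fix u assume "u \<in> {u\<in>V. E (f i) u}"
      then have "g u \<in> A" "u = f (g u)" "E (f i) (f (g u))"
        using inv_in_A f_inv_eq by auto
      then have "F i (g u)" using edges \<open>i \<in> A\<close> by blast
      then show "u \<in> f ` {j\<in>A. F i j}" using \<open>g u \<in> A\<close> \<open>u = f (g u)\<close> by blast
    qed
    show "f ` {j\<in>A. F i j} \<subseteq> {u\<in>V. E (f i) u}"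
      using \<open>i \<in> A\<close> edges f_in_V by auto
  qed
  moreover have "inj_on f {j\<in>A. F i j}"
    using bij_betw_imp_inj_on[OF bij] by (rule inj_on_subset) auto
  ultimately show ?thesis
    unfolding degree_def by (simp add: card_image)
qed

lemma unfrozen_comp: "unfrozen V E L \<phi> \<Longrightarrow> unfrozen A F (L \<circ> f) (\<phi> \<circ> f)"
proof -
  assume "unfrozen V E L \<phi>"
  then obtain v where "v \<in> V" "\<not> frozen_at V E L \<phi> v"
    unfolding unfrozen_def by blast
  then obtain c where c: "c \<in> L v - {\<phi> v}" "\<And>u. u \<in> V \<Longrightarrow> E v u \<Longrightarrow> \<phi> u \<noteq> c"
    unfolding frozen_at_def by blast
  have "\<not> frozen_at A F (L \<circ> f) (\<phi> \<circ> f) (g v)"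
    unfolding frozen_at_def using c f_inv_eq[OF \<open>v \<in> V\<close>] edges[OF inv_in_A[OF \<open>v \<in> V\<close>]] f_in_V by auto
  then show ?thesis
    unfolding unfrozen_def using inv_in_A[OF \<open>v \<in> V\<close>] by blast
qed

lemma recol_step_comp_inv:
  assumes "recol_step A F (L \<circ> f) \<chi> \<chi>'"
  shows "recol_step V E L (\<chi> \<circ> g) (\<chi>' \<circ> g)"
proof -
  from assms obtain i where "i \<in> A" "\<forall>j\<in>A. j \<noteq> i \<longrightarrow> \<chi> j = \<chi>' j"
    and col: "L_colouring A F (L \<circ> f) \<chi>" "L_colouring A F (L \<circ> f) \<chi>'"
    unfolding recol_step_def by blast
  then have "(\<chi> \<circ> g) u = (\<chi>' \<circ> g) u" if "u \<in> V" "u \<noteq> f i" for u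
    using that inv_in_A f_inv_eq by (metis comp_apply)
  then show ?thesis
    using recol_stepI[OF L_colouring_comp_inv[OF col(1)] L_colouring_comp_inv[OF col(2)]
        f_in_V[OF \<open>i \<in> A\<close>]] by blast
qed

lemma reconf_if_reconf_comp:
  assumes path: "(recol_step A F (L \<circ> f))\<^sup>*\<^sup>* (\<phi> \<circ> f) (\<psi> \<circ> f)" and "V \<noteq> {}"
    and col: "L_colouring V E L \<phi>" "L_colouring V E L \<psi>"
  shows "(recol_step V E L)\<^sup>*\<^sup>* \<phi> \<psi>"
proof -
  have "(recol_step V E L)\<^sup>*\<^sup>* (\<phi> \<circ> f \<circ> g) (\<psi> \<circ> f \<circ> g)"
    using path
  proof (induction rule: rtranclp_induct)
    case (step \<chi> \<chi>')
    then show ?case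
      using recol_step_comp_inv by (meson rtranclp.rtrancl_into_rtrancl)
  qed simp
  then show ?thesis
    by (rule rtranclp_recol_step_cong[OF _ \<open>V \<noteq> {}\<close> col]) (simp_all add: f_inv_eq)
qed

end

theorem mainTheorem15:
  fixes V :: "'a set" and E :: "'a \<Rightarrow> 'a \<Rightarrow> bool" and L :: "'a \<Rightarrow> 'c set"
    and k :: nat and f :: "nat \<Rightarrow> 'a" and \<alpha> \<beta> :: "'a \<Rightarrow> 'c"
  assumes bij: "bij_betw f {0..k+3} V"
    and iso: "\<forall>i\<in>{0..k+3}. \<forall>j\<in>{0..k+3}. E (f i) (f j) \<longleftrightarrow> subdiv_claw_edge k i j"
    and fin: "\<forall>v\<in>V. finite (L v)"
    and lists: "\<forall>v\<in>V. card (L v) \<ge> degree V E v + 1"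
    and \<alpha>: "L_colouring V E L \<alpha>" "unfrozen V E L \<alpha>"
    and \<beta>: "L_colouring V E L \<beta>" "unfrozen V E L \<beta>"
  shows "reconf_equiv V E L \<alpha> \<beta>"
proof -
  interpret graph_isomorphism f "{0..k+3}" V "subdiv_claw_edge k" E
    using bij iso by unfold_locales auto
  interpret claw_lists k "L \<circ> f"
    using fin lists f_in_V degree_comp by unfold_locales auto
  have "V \<noteq> {}" using f_in_V[of 0] by auto
  have "reconf (\<alpha> \<circ> f) (\<beta> \<circ> f)"
    using reconf_if_unfrozen L_colouring_comp unfrozen_comp \<alpha> \<beta> by blast
  then show ?thesis
    unfolding reconf_equiv_def using reconf_if_reconf_comp \<open>V \<noteq> {}\<close> \<alpha>(1) \<beta>(1) by blast
qed

end
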